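(* There is an absolute constant $C>0$ such that the following holds. Let $n\ge 2$ and let $f:\{0,1\}^n\to\{0,1\}$ be a read-once DNF formula. Under unit costs ($c_i=1$ for all $i$) and the uniform distribution ($p_i=1/2$ for all $i$), there is a non-adaptive strategy $S$ with $$\mathrm{cost}_{c,p}(f,S)\le C\log n\cdot \mathsf{OPT}_{\mathcal A}(f,c,p).$$
   Context: Stochastic Boolean Function Evaluation (SBFE) setup: $f:\{0,1\}^n\to\{0,1\}$ is a known Boolean function, $c\in\mathbb{R}_{>0}^n$ a cost vector and $p\in(0,1)^n$ a probability vector. The unknown input $x\in\{0,1\}^n$ is random with independent coordinates and $\Pr(x_i=1)=p_i$ (written $x\sim p$). The value $x_i$ can only be learned by testing variable $i$, at cost $c_i$. A strategy tests variables sequentially until $f(x)$ is determined, i.e. until $f(x')=f(x)$ for every $x'\in\{0,1\}^n$ agreeing with $x$ on all tested coordinates. An adaptive strategy is a decision tree (the next test may depend on previous outcomes); a non-adaptive strategy is a fixed permutation of $[n]$, with variables tested in that order until $f(x)$ is determined. $\mathrm{cost}_c(f,x,S)$ is the total cost of the tests performed by $S$ on input $x$, and $\mathrm{cost}_{c,p}(f,S)=\mathbb{E}_{x\sim p}[\mathrm{cost}_c(f,x,S)]$. $\mathsf{OPT}_{\mathcal A}(f,c,p)$ (resp. $\mathsf{OPT}_{\mathcal N}(f,c,p)$) is the minimum of $\mathrm{cost}_{c,p}(f,S)$ over all adaptive (resp. non-adaptive) strategies $S$. A DNF formula is a disjunction $T_1\vee\dots\vee T_m$ of terms, each a conjunction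 of literals (variables or negated variables); it is read-once if no variable is negated and distinct terms contain disjoint sets of variables. *)

theory Defs
  imports Complex_Main
begin

text \<open>Inputs x in {0,1}^n, variables indexed 0..n-1, encoded as functions
  nat => bool that are False outside {..<n}.\<close>
definition inputs :: "nat \<Rightarrow> (nat \<Rightarrow> bool) set" where
  "inputs n = {x. \<forall>i\<ge>n. \<not> x i}"

definition prob :: "nat \<Rightarrow> (nat \<Rightarrow> real) \<Rightarrow> (nat \<Rightarrow> bool) \<Rightarrow> real" where
  "prob n p x = (\<Prod>i<n. if x i then p i else 1 - p i)"

definition expect :: "nat \<Rightarrow> (nat \<Rightarrow> real) \<Rightarrow> ((nat \<Rightarrow> bool) \<Rightarrow> real) \<Rightarrow> real" where
  "expect n p g = (\<Sum>x\<in>inputs n. prob n p x * g x)"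

definition determined :: "nat \<Rightarrow> ((nat \<Rightarrow> bool) \<Rightarrow> bool) \<Rightarrow> nat set \<Rightarrow> (nat \<Rightarrow> bool) \<Rightarrow> bool" where
  "determined n f A x = (\<forall>y\<in>inputs n. (\<forall>i\<in>A. y i = x i) \<longrightarrow> f y = f x)"

text \<open>Adaptive strategies: decision trees. Node i l r tests variable i and
  continues in l if x_i = 0 and in r if x_i = 1; Leaf means stop.\<close>
datatype dtree = Leaf | Node nat dtree dtree

fun dcost :: "(nat \<Rightarrow> real) \<Rightarrow> dtree \<Rightarrow> (nat \<Rightarrow> bool) \<Rightarrow> real" where
  "dcost c Leaf x = 0"
| "dcost c (Node i l r) x = c i + dcost c (if x i then r else l) x"

fun dtested :: "dtree \<Rightarrow> (nat \<Rightarrow> bool) \<Rightarrow> nat set" where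
  "dtested Leaf x = {}"
| "dtested (Node i l r) x = insert i (dtested (if x i then r else l) x)"

fun dvars :: "dtree \<Rightarrow> nat set" where
  "dvars Leaf = {}"
| "dvars (Node i l r) = insert i (dvars l \<union> dvars r)"

definition valid_tree :: "nat \<Rightarrow> ((nat \<Rightarrow> bool) \<Rightarrow> bool) \<Rightarrow> dtree \<Rightarrow> bool" where
  "valid_tree n f T = (dvars T \<subseteq> {..<n} \<and> (\<forall>x\<in>inputs n. determined n f (dtested T x) x))"

definition OPT_A :: "nat \<Rightarrow> ((nat \<Rightarrow> bool) \<Rightarrow> bool) \<Rightarrow> (nat \<Rightarrow> real) \<Rightarrow> (nat \<Rightarrow> real) \<Rightarrow> real" where
  "OPT_A n f c p = Inf ((\<lambda>T. expect n p (dcost c T)) ` {T. valid_tree n f T})"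

text \<open>Non-adaptive strategies: a permutation of [n] given as a list; variables
  are tested in this order until f(x) is determined.\<close>
definition is_perm :: "nat \<Rightarrow> nat list \<Rightarrow> bool" where
  "is_perm n \<sigma> = (distinct \<sigma> \<and> set \<sigma> = {..<n})"

definition nacost :: "nat \<Rightarrow> ((nat \<Rightarrow> bool) \<Rightarrow> bool) \<Rightarrow> (nat \<Rightarrow> real) \<Rightarrow> nat list \<Rightarrow> (nat \<Rightarrow> bool) \<Rightarrow> real" where
  "nacost n f c \<sigma> x =
     (let k = (LEAST k. determined n f (set (take k \<sigma>)) x) in (\<Sum>i\<leftarrow>take k \<sigma>. c i))"

definition nacost_exp :: "nat \<Rightarrow> ((nat \<Rightarrow> bool) \<Rightarrow> bool) \<Rightarrow> (nat \<Rightarrow> real) \<Rightarrow> (nat \<Rightarrow> real) \<Rightarrow> nat list \<Rightarrow> real" where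
  "nacost_exp n f c p \<sigma> = expect n p (nacost n f c \<sigma>)"

text \<open>Read-once DNF over variables [n]: a finite family of pairwise disjoint,
  nonempty sets of (unnegated) variables; f(x) = OR over terms of AND of x_i.\<close>
definition read_once_dnf :: "nat \<Rightarrow> nat set set \<Rightarrow> bool" where
  "read_once_dnf n Ts = (finite Ts \<and> (\<forall>T\<in>Ts. T \<noteq> {} \<and> T \<subseteq> {..<n}) \<and>
      (\<forall>T\<in>Ts. \<forall>T'\<in>Ts. T \<noteq> T' \<longrightarrow> T \<inter> T' = {}))"

definition dnf_eval :: "nat set set \<Rightarrow> (nat \<Rightarrow> bool) \<Rightarrow> bool" where
  "dnf_eval Ts x = (\<exists>T\<in>Ts. \<forall>i\<in>T. x i)"

end

theory Submission
  imports Defs "HOL-Combinatorics.Multiset_Permutations"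
begin

text \<open>
  Two lower bounds hold for every adaptive strategy.  On an input with \<open>f(x) = 0\<close> every
  term must contain a tested zero, so with \<open>m\<close> disjoint terms the optimum is at least
  \<open>m \<cdot> Pr[f = 0]\<close>.  It is also at least the least expected number of terms inspected when the
  terms are scanned in a fixed order until a satisfied one is found; this follows from a
  potential function which a single test lowers by at most \<open>1\<close> in expectation and which
  vanishes once \<open>f(x)\<close> is determined.

  The non-adaptive strategy takes an optimal scanning order, moves the terms with at most
  \<open>K = 2\<lceil>log\<^sub>2 n\<rceil>\<close> variables to the front and tests the first \<open>K\<close> variables of each term,
  term by term.  On a satisfying input it pays at most \<open>K\<close> per inspected term, on a
  falsifying input at most \<open>K m\<close>, unless some large term begins with \<open>K\<close> ones; that has
  probability at most \<open>m 2\<^sup>-\<^sup>K \<le> 1/n\<close> and costs at most \<open>n\<close>.  Altogether the expected cost is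
  at most \<open>(2K + 1) OPT = O(log n) OPT\<close>.
\<close>

section \<open>Uniform averages over subcubes\<close>

lemma bij_betw_inputs_Pow: "bij_betw (\<lambda>x. {i. x i}) (inputs n) (Pow {..<n})"
  by (rule bij_betw_byWitness[where f' = "\<lambda>A i. i \<in> A"])
     (auto simp: inputs_def not_less[symmetric])

lemma finite_inputs: "finite (inputs n)"
  using bij_betw_finite[OF bij_betw_inputs_Pow] by simp

lemma card_inputs: "card (inputs n) = 2 ^ n"
  using bij_betw_same_card[OF bij_betw_inputs_Pow] by (simp add: card_Pow)

lemma fun_upd_in_inputs: "z \<in> inputs n \<Longrightarrow> i < n \<Longrightarrow> z(i := b) \<in> inputs n"
  by (auto simp: inputs_def)

text \<open>\<open>cube_avg n D z g\<close> is the conditional expectation of \<open>g\<close> under the uniform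
  distribution, given that the input agrees with \<open>z\<close> on \<open>D\<close>.\<close>

definition subcube :: "nat \<Rightarrow> nat set \<Rightarrow> (nat \<Rightarrow> bool) \<Rightarrow> (nat \<Rightarrow> bool) set" where
  "subcube n D z = {y \<in> inputs n. \<forall>i\<in>D. y i = z i}"

definition cube_avg :: "nat \<Rightarrow> nat set \<Rightarrow> (nat \<Rightarrow> bool) \<Rightarrow> ((nat \<Rightarrow> bool) \<Rightarrow> real) \<Rightarrow> real" where
  "cube_avg n D z g = (\<Sum>y\<in>subcube n D z. g y) / card (subcube n D z)"

lemma finite_subcube: "finite (subcube n D z)"
  unfolding subcube_def by (rule finite_subset[OF _ finite_inputs]) auto

lemma self_in_subcube: "z \<in> inputs n \<Longrightarrow> z \<in> subcube n D z"
  by (simp add: subcube_def)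

lemma card_subcube_pos: "z \<in> inputs n \<Longrightarrow> 0 < card (subcube n D z)"
  using finite_subcube self_in_subcube card_gt_0_iff by blast

lemma subcube_empty [simp]: "subcube n {} z = inputs n"
  by (simp add: subcube_def)

lemma subcube_full:
  assumes "{..<n} \<subseteq> D" "z \<in> inputs n"
  shows "subcube n D z = {z}"
  using assms by (auto simp: subcube_def inputs_def fun_eq_iff) (metis lessThan_iff not_less subsetD)+

lemma subcube_halves:
  assumes "i \<notin> D"
  shows "subcube n D z = subcube n (insert i D) (z(i := False)) \<union> subcube n (insert i D) (z(i := True))"
    and "subcube n (insert i D) (z(i := False)) \<inter> subcube n (insert i D) (z(i := True)) = {}"
  using assms by (auto simp: subcube_def)

lemma bij_betw_subcube_halves:
  assumes "i \<notin> D" "i < n"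
  shows "bij_betw (\<lambda>y. y(i := True))
           (subcube n (insert i D) (z(i := False))) (subcube n (insert i D) (z(i := True)))"
  by (rule bij_betw_byWitness[where f' = "\<lambda>y. y(i := False)"])
     (use assms in \<open>auto simp: subcube_def inputs_def fun_eq_iff\<close>)

lemma cube_avg_split:
  assumes "i \<notin> D" "i < n" "z \<in> inputs n"
  shows "cube_avg n D z g =
    (cube_avg n (insert i D) (z(i := False)) g + cube_avg n (insert i D) (z(i := True)) g) / 2"
proof -
  let ?C0 = "subcube n (insert i D) (z(i := False))" and ?C1 = "subcube n (insert i D) (z(i := True))"
  have card_eq: "card ?C1 = card ?C0"
    using bij_betw_same_card[OF bij_betw_subcube_halves[OF assms(1,2)]] by simp
  have "0 < card ?C0"
    using card_subcube_pos[OF fun_upd_in_inputs[OF assms(3,2)]] by simp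
  moreover have "(\<Sum>y\<in>subcube n D z. g y) = (\<Sum>y\<in>?C0. g y) + (\<Sum>y\<in>?C1. g y)"
    and "card (subcube n D z) = card ?C0 + card ?C1"
    using subcube_halves[OF assms(1), of n z] finite_subcube
    by (simp_all add: sum.union_disjoint card_Un_disjoint)
  ultimately show ?thesis
    unfolding cube_avg_def card_eq by (simp add: field_simps)
qed

lemma cube_avg_upper_half:
  assumes "i \<notin> D" "i < n"
  shows "cube_avg n (insert i D) (z(i := True)) g =
         cube_avg n (insert i D) (z(i := False)) (\<lambda>y. g (y(i := True)))"
  using sum.reindex_bij_betw[OF bij_betw_subcube_halves[OF assms], of g]
        bij_betw_same_card[OF bij_betw_subcube_halves[OF assms]]
  by (simp add: cube_avg_def)

lemma cube_avg_cong: "(\<And>y. y \<in> subcube n D z \<Longrightarrow> g y = h y) \<Longrightarrow> cube_avg n D z g = cube_avg n D z h"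
  unfolding cube_avg_def by (metis sum.cong)

lemma cube_avg_const: "z \<in> inputs n \<Longrightarrow> cube_avg n D z (\<lambda>_. c) = c"
  using card_subcube_pos[of z n D] by (simp add: cube_avg_def)

lemma cube_avg_add: "cube_avg n D z (\<lambda>y. g y + h y) = cube_avg n D z g + cube_avg n D z h"
  unfolding cube_avg_def by (simp add: sum.distrib add_divide_distrib)

definition depends_only :: "nat set \<Rightarrow> ((nat \<Rightarrow> bool) \<Rightarrow> 'a) \<Rightarrow> bool" where
  "depends_only A g \<longleftrightarrow> (\<forall>x y. (\<forall>i\<in>A. x i = y i) \<longrightarrow> g x = g y)"

lemma cube_avg_upper_half_indep:
  assumes "i \<notin> D" "i < n" "depends_only A g" "i \<notin> A"
  shows "cube_avg n (insert i D) (z(i := True)) g = cube_avg n (insert i D) (z(i := False)) g"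
proof -
  have "g (y(i := True)) = g y" for y
    using assms(3,4) unfolding depends_only_def by (metis fun_upd_other)
  then show ?thesis using cube_avg_upper_half[OF assms(1,2)] by simp
qed

lemma cube_avg_mult_indep_step:
  assumes "i \<notin> D" "i < n" "z \<in> inputs n" "depends_only A g" "i \<notin> A"
    and halves: "\<And>b. cube_avg n (insert i D) (z(i := b)) (\<lambda>y. g y * h y) =
      cube_avg n (insert i D) (z(i := b)) g * cube_avg n (insert i D) (z(i := b)) h"
  shows "cube_avg n D z (\<lambda>y. g y * h y) = cube_avg n D z g * cube_avg n D z h"
  unfolding cube_avg_split[OF assms(1-3)] halves
    cube_avg_upper_half_indep[OF assms(1,2,4,5)]
  by (simp add: field_simps)

lemma cube_avg_mult_indep:
  assumes "z \<in> inputs n" "depends_only A g" "depends_only B h" "A \<inter> B = {}"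
  shows "cube_avg n D z (\<lambda>y. g y * h y) = cube_avg n D z g * cube_avg n D z h"
  using assms(1)
proof (induction "card ({..<n} - D)" arbitrary: D z rule: less_induct)
  case less
  show ?case
  proof (cases "{..<n} \<subseteq> D")
    case True
    then show ?thesis using subcube_full[OF True less.prems] by (simp add: cube_avg_def)
  next
    case False
    then obtain i where i: "i < n" "i \<notin> D" by auto
    have "card ({..<n} - insert i D) < card ({..<n} - D)"
      using i by (intro psubset_card_mono) auto
    then have halves: "cube_avg n (insert i D) (z(i := b)) (\<lambda>y. g y * h y) =
        cube_avg n (insert i D) (z(i := b)) g * cube_avg n (insert i D) (z(i := b)) h" for b
      using less.hyps fun_upd_in_inputs[OF less.prems i(1)] by blast
    show ?thesis
    proof (cases "i \<in> A")
      case False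
      then show ?thesis by (rule cube_avg_mult_indep_step[OF i(2,1) less.prems assms(2) _ halves])
    next
      case True
      then have "i \<notin> B" using assms(4) by auto
      with halves show ?thesis
        using cube_avg_mult_indep_step[OF i(2,1) less.prems assms(3), of "g"]
        by (simp add: mult.commute)
    qed
  qed
qed

lemma prob_uniform: "prob n (\<lambda>_. 1/2) x = 1 / 2 ^ n"
proof -
  have "prob n (\<lambda>_. 1/2) x = (\<Prod>i<n. 1/2)"
    unfolding prob_def by (rule prod.cong) auto
  then show ?thesis by (simp add: power_one_over)
qed

lemma expect_uniform: "expect n (\<lambda>_. 1/2) g = cube_avg n {} z g"
  by (simp add: expect_def cube_avg_def prob_uniform card_inputs sum_divide_distrib)

lemma expect_add: "expect n p (\<lambda>x. g x + h x) = expect n p g + expect n p h"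
  by (simp add: expect_def distrib_left sum.distrib)

lemma expect_diff: "expect n p (\<lambda>x. g x - h x) = expect n p g - expect n p h"
  by (simp add: expect_def right_diff_distrib sum_subtractf)

lemma expect_cmult: "expect n p (\<lambda>x. c * g x) = c * expect n p g"
  by (simp add: expect_def sum_distrib_left mult.left_commute)

lemma expect_sum: "expect n p (\<lambda>x. \<Sum>a\<in>A. g a x) = (\<Sum>a\<in>A. expect n p (g a))"
  by (simp add: expect_def sum_distrib_left sum.swap[of _ _ A])

lemma expect_uniform_const: "expect n (\<lambda>_. 1/2) (\<lambda>_. c) = c"
  by (simp add: expect_def prob_uniform card_inputs)

lemma expect_uniform_mono:
  "(\<And>x. x \<in> inputs n \<Longrightarrow> g x \<le> h x) \<Longrightarrow> expect n (\<lambda>_. 1/2) g \<le> expect n (\<lambda>_. 1/2) h"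
  unfolding expect_def prob_uniform by (intro sum_mono mult_left_mono) auto

lemma expect_uniform_mult_indep:
  assumes "depends_only A g" "depends_only B h" "A \<inter> B = {}"
  shows "expect n (\<lambda>_. 1/2) (\<lambda>x. g x * h x) = expect n (\<lambda>_. 1/2) g * expect n (\<lambda>_. 1/2) h"
  unfolding expect_uniform[where z = "\<lambda>_. False"]
  by (rule cube_avg_mult_indep[OF _ assms]) (simp add: inputs_def)

lemma expect_uniform_var:
  assumes "i < n"
  shows "expect n (\<lambda>_. 1/2) (\<lambda>x. of_bool (x i)) = 1/2"
proof -
  let ?z = "\<lambda>_. False"
  have "?z \<in> inputs n" by (simp add: inputs_def)
  then have "cube_avg n {i} (?z(i := b)) (\<lambda>x. of_bool (x i)) = of_bool b" for b
    using cube_avg_const fun_upd_in_inputs[OF _ assms]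
    by (subst cube_avg_cong[where h = "\<lambda>_. of_bool b"]) (auto simp: subcube_def)
  then show ?thesis
    using cube_avg_split[of i "{}" n ?z] assms \<open>?z \<in> inputs n\<close>
    by (simp add: expect_uniform[where z = ?z])
qed

lemma depends_only_all_ones: "depends_only T (\<lambda>x. of_bool (\<forall>i\<in>T. x i))"
  by (auto simp: depends_only_def)

lemma expect_all_ones:
  assumes "T \<subseteq> {..<n}"
  shows "expect n (\<lambda>_. 1/2) (\<lambda>x. of_bool (\<forall>i\<in>T. x i)) = (1/2) ^ card T"
  using finite_subset[OF assms finite_lessThan] assms
proof (induction T rule: finite_induct)
  case empty
  then show ?case by (simp add: expect_uniform_const)
next
  case (insert a F)
  have "depends_only {a} (\<lambda>x. of_bool (x a) :: real)"
    by (auto simp: depends_only_def)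
  then have "expect n (\<lambda>_. 1/2) (\<lambda>x. of_bool (x a) * of_bool (\<forall>i\<in>F. x i)) = 1/2 * (1/2) ^ card F"
    using insert expect_uniform_var[of a n]
    by (simp add: expect_uniform_mult_indep[OF _ depends_only_all_ones])
  then show ?case using insert by (simp add: of_bool_conj)
qed

section \<open>Decision trees\<close>

lemma determinedD: "determined n f A x \<Longrightarrow> y \<in> inputs n \<Longrightarrow> \<forall>i\<in>A. y i = x i \<Longrightarrow> f y = f x"
  unfolding determined_def by blast

lemma determined_mono: "determined n f A x \<Longrightarrow> A \<subseteq> B \<Longrightarrow> determined n f B x"
  unfolding determined_def by blast

lemma determined_of_satisfied_term:
  assumes "T \<in> Ts" "T \<subseteq> A" "\<forall>i\<in>T. x i"
  shows "determined n (dnf_eval Ts) A x"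
  using assms unfolding determined_def dnf_eval_def by blast

lemma determined_of_falsified_terms:
  assumes "\<forall>T\<in>Ts. \<exists>i\<in>T \<inter> A. \<not> x i"
  shows "determined n (dnf_eval Ts) A x"
proof -
  have "\<not> dnf_eval Ts y" if "\<forall>i\<in>A. y i = x i" for y
  proof
    assume "dnf_eval Ts y"
    then obtain T where "T \<in> Ts" "\<forall>i\<in>T. y i"
      unfolding dnf_eval_def by blast
    with assms that show False by blast
  qed
  then show ?thesis
    unfolding determined_def by auto
qed

lemma finite_dtested: "finite (dtested t x)"
  by (induction t) auto

lemma card_dtested_le_dcost: "real (card (dtested t x)) \<le> dcost (\<lambda>_. 1) t x"
proof (induction t)
  case (Node i l r)
  have "card (dtested (Node i l r) x) \<le> Suc (card (dtested (if x i then r else l) x))"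
    by (simp add: card_insert_if finite_dtested)
  with Node show ?case by (cases "x i") auto
qed simp

lemma determined_of_all_vars: "{..<n} \<subseteq> A \<Longrightarrow> x \<in> inputs n \<Longrightarrow> determined n f A x"
  using subcube_full[of n A x] by (auto simp: determined_def subcube_def)

lemma cube_avg_dcost_Node:
  assumes "i \<in> D" "z \<in> inputs n"
  shows "cube_avg n D z (dcost (\<lambda>_. 1) (Node i l r)) =
    1 + cube_avg n D z (dcost (\<lambda>_. 1) (if z i then r else l))"
proof -
  have "cube_avg n D z (dcost (\<lambda>_. 1) (Node i l r)) =
      cube_avg n D z (\<lambda>y. 1 + dcost (\<lambda>_. 1) (if z i then r else l) y)"
    using assms(1) by (intro cube_avg_cong) (simp add: subcube_def)
  then show ?thesis
    by (simp add: cube_avg_add cube_avg_const[OF assms(2)])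
qed

fun fixed_order_tree :: "nat list \<Rightarrow> dtree" where
  "fixed_order_tree [] = Leaf"
| "fixed_order_tree (i # is) = Node i (fixed_order_tree is) (fixed_order_tree is)"

lemma valid_fixed_order_tree: "valid_tree n f (fixed_order_tree [0..<n])"
proof -
  have "dtested (fixed_order_tree is) x = set is" "dvars (fixed_order_tree is) = set is" for "is" x
    by (induction "is") auto
  then show ?thesis
    unfolding valid_tree_def by (auto intro: determined_of_all_vars)
qed

lemma OPT_A_greatest:
  assumes "\<And>t. valid_tree n f t \<Longrightarrow> B \<le> expect n p (dcost c t)"
  shows "B \<le> OPT_A n f c p"
  unfolding OPT_A_def by (rule cInf_greatest) (use valid_fixed_order_tree assms in auto)

section \<open>Scanning the terms in a fixed order\<close>

fun scan_count :: "nat set list \<Rightarrow> (nat \<Rightarrow> bool) \<Rightarrow> nat" where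
  "scan_count [] x = 0"
| "scan_count (T # l) x = Suc (if \<forall>i\<in>T. x i then 0 else scan_count l x)"

fun seq_cost :: "nat set list \<Rightarrow> real" where
  "seq_cost [] = 0"
| "seq_cost (T # l) = 1 + (1 - (1/2) ^ card T) * seq_cost l"

lemma scan_count_filter_le:
  assumes "\<forall>T\<in>set l. \<not> P T \<longrightarrow> \<not> (\<forall>i\<in>T. x i)"
  shows "scan_count (filter P l) x \<le> scan_count l x"
  using assms by (induction l) auto

lemma depends_only_scan_count: "depends_only (\<Union>(set l)) (\<lambda>x. real (scan_count l x))"
  unfolding depends_only_def
proof (intro allI impI)
  fix x y :: "nat \<Rightarrow> bool"
  assume "\<forall>i\<in>\<Union>(set l). x i = y i"
  then show "real (scan_count l x) = real (scan_count l y)"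
    by (induction l) auto
qed

lemma seq_cost_nonneg: "0 \<le> seq_cost l"
proof (induction l)
  case (Cons T l)
  have "(1/2::real) ^ card T \<le> 1" by (simp add: power_le_one)
  with Cons show ?case by simp
qed simp

lemma seq_cost_ge_1: "l \<noteq> [] \<Longrightarrow> 1 \<le> seq_cost l"
proof (cases l)
  case (Cons T l')
  have "(1/2::real) ^ card T \<le> 1" by (simp add: power_le_one)
  with Cons seq_cost_nonneg[of l'] show ?thesis by simp
qed simp

definition best_seq_cost :: "nat set set \<Rightarrow> real" where
  "best_seq_cost U = Min (seq_cost ` permutations_of_set U)"

lemma best_seq_cost_attained:
  assumes "finite U"
  obtains l where "l \<in> permutations_of_set U" "seq_cost l = best_seq_cost U"
proof -
  have "permutations_of_set U \<noteq> {}"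
    using finite_distinct_list[OF assms] by (auto simp: permutations_of_set_def)
  then have "best_seq_cost U \<in> seq_cost ` permutations_of_set U"
    unfolding best_seq_cost_def by (intro Min_in) auto
  then show ?thesis using that by auto
qed

lemma best_seq_cost_le: "l \<in> permutations_of_set U \<Longrightarrow> best_seq_cost U \<le> seq_cost l"
  unfolding best_seq_cost_def by simp

lemma best_seq_cost_nonneg: "finite U \<Longrightarrow> 0 \<le> best_seq_cost U"
  by (metis best_seq_cost_attained seq_cost_nonneg)

lemma best_seq_cost_empty [simp]: "best_seq_cost {} = 0"
  by (simp add: best_seq_cost_def)

lemma best_seq_cost_ge_1: "finite U \<Longrightarrow> U \<noteq> {} \<Longrightarrow> 1 \<le> best_seq_cost U"
  by (metis best_seq_cost_attained permutations_of_setD(1) seq_cost_ge_1 set_empty)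

lemma best_seq_cost_remove:
  assumes "finite U" "T \<in> U"
  shows "best_seq_cost U \<le> 1 + (1 - (1/2) ^ card T) * best_seq_cost (U - {T})"
proof -
  obtain l where l: "l \<in> permutations_of_set (U - {T})" "seq_cost l = best_seq_cost (U - {T})"
    using best_seq_cost_attained assms(1) by blast
  then have "T # l \<in> permutations_of_set U"
    using assms(2) by (auto simp: permutations_of_set_def)
  then show ?thesis using best_seq_cost_le l(2) by fastforce
qed

section \<open>Testing terms in blocks\<close>

lemma nacost_le:
  assumes "determined n f (set (take k \<sigma>)) x"
  shows "nacost n f (\<lambda>_. 1) \<sigma> x \<le> k"
proof -
  have "(LEAST k. determined n f (set (take k \<sigma>)) x) \<le> k"
    using assms by (rule Least_le)
  then show ?thesis
    by (simp add: nacost_def sum_list_triv)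
qed

lemma nacost_le_n:
  assumes "is_perm n \<sigma>" "x \<in> inputs n"
  shows "nacost n f (\<lambda>_. 1) \<sigma> x \<le> n"
proof -
  have "length \<sigma> = n"
    using assms(1) distinct_card[of \<sigma>] by (simp add: is_perm_def)
  then show ?thesis
    using assms by (intro nacost_le determined_of_all_vars) (auto simp: is_perm_def)
qed

definition extend_perm :: "nat \<Rightarrow> nat list \<Rightarrow> nat list" where
  "extend_perm n xs = xs @ filter (\<lambda>i. i \<notin> set xs) [0..<n]"

lemma is_perm_extend_perm: "distinct xs \<Longrightarrow> set xs \<subseteq> {..<n} \<Longrightarrow> is_perm n (extend_perm n xs)"
  by (auto simp: is_perm_def extend_perm_def)

lemma set_take_extend_perm: "set (take k xs) \<subseteq> set (take k (extend_perm n xs))"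
  by (simp add: extend_perm_def take_append)

definition block :: "nat \<Rightarrow> nat set \<Rightarrow> nat list" where
  "block K T = take K (sorted_list_of_set T)"

definition blocks :: "nat \<Rightarrow> nat set list \<Rightarrow> nat list" where
  "blocks K l = concat (map (block K) l)"

lemma distinct_block: "distinct (block K T)"
  by (simp add: block_def)

lemma set_block_subset: "set (block K T) \<subseteq> T"
  by (cases "finite T") (auto simp: block_def dest: in_set_takeD)

lemma length_block: "length (block K T) \<le> K"
  by (simp add: block_def)

lemma set_block_small: "finite T \<Longrightarrow> card T \<le> K \<Longrightarrow> set (block K T) = T"
  by (simp add: block_def)

lemma card_set_block_large: "finite T \<Longrightarrow> K < card T \<Longrightarrow> card (set (block K T)) = K"
  by (simp add: block_def distinct_card)

lemma set_blocks: "set (blocks K l) = (\<Union>T\<in>set l. set (block K T))"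
  by (simp add: blocks_def)

lemma length_blocks: "length (blocks K l) \<le> K * length l"
  by (induction l) (auto simp: blocks_def intro: add_mono length_block)

lemma satisfied_term_in_prefix_blocks:
  assumes "\<forall>T\<in>set l. finite T \<and> card T \<le> K" "\<exists>T\<in>set l. \<forall>i\<in>T. x i"
  shows "\<exists>T\<in>set l. (\<forall>i\<in>T. x i) \<and> T \<subseteq> set (take (K * scan_count l x) (blocks K l))"
  using assms
proof (induction l)
  case (Cons T l)
  have block: "set (block K T) = T" "length (block K T) \<le> K"
    using Cons.prems(1) by (simp_all add: set_block_small length_block)
  show ?case
  proof (cases "\<forall>i\<in>T. x i")
    case True
    have "scan_count (T # l) x = 1"
      by (simp only: scan_count.simps if_P[OF True] One_nat_def)
    then have "T \<subseteq> set (take (K * scan_count (T # l) x) (blocks K (T # l)))"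
      using block by (simp add: blocks_def take_append)
    with True show ?thesis by simp
  next
    case False
    then obtain T' where T': "T' \<in> set l" "\<forall>i\<in>T'. x i"
        "T' \<subseteq> set (take (K * scan_count l x) (blocks K l))"
      using Cons by auto
    have "scan_count (T # l) x = Suc (scan_count l x)"
      by (simp only: scan_count.simps if_not_P[OF False])
    then have "K * scan_count l x \<le> K * scan_count (T # l) x - length (block K T)"
      using block(2) by simp
    then have "set (take (K * scan_count l x) (blocks K l)) \<subseteq>
        set (take (K * scan_count (T # l) x - length (block K T)) (blocks K l))"
      by (rule set_take_subset_set_take)
    also have "\<dots> \<subseteq> set (take (K * scan_count (T # l) x) (blocks K (T # l)))"
      by (auto simp: blocks_def take_append simp del: scan_count.simps)
    finally show ?thesis
      using T' by (meson list.set_intros(2) order_trans)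
  qed
qed simp

lemma of_bool_bex_le_sum:
  assumes "finite A"
  shows "of_bool (\<exists>a\<in>A. P a) \<le> (\<Sum>a\<in>A. of_bool (P a) :: real)"
proof (cases "\<exists>a\<in>A. P a")
  case True
  then obtain a where "a \<in> A" "P a" by blast
  then show ?thesis
    using member_le_sum[of a A "\<lambda>a. of_bool (P a) :: real"] assms by simp
qed (simp add: sum_nonneg)

section \<open>Read-once DNF formulas\<close>

text \<open>Once the input is known to agree with \<open>z\<close> on \<open>D\<close>, \<open>term_factor T D z\<close> is the
  conditional probability that \<open>T\<close> is unsatisfied if \<open>T\<close> meets \<open>D\<close>, and \<open>1\<close> otherwise.  The
  potential charges the probability that no term meeting \<open>D\<close> is satisfied with the optimal
  scanning cost of the untouched terms.\<close>

definition term_factor :: "nat set \<Rightarrow> nat set \<Rightarrow> (nat \<Rightarrow> bool) \<Rightarrow> real" where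
  "term_factor T D z =
     (if T \<inter> D \<noteq> {} \<and> (\<forall>i\<in>T \<inter> D. z i) then 1 - (1/2) ^ card (T - D) else 1)"

lemma term_factor_bounds: "0 \<le> term_factor T D z" "term_factor T D z \<le> 1"
  unfolding term_factor_def by (auto simp: power_le_one)

lemma term_factor_fun_upd_other:
  assumes "i \<notin> T"
  shows "term_factor T (insert i D) (z(i := b)) = term_factor T D z"
proof -
  have "T \<inter> insert i D = T \<inter> D" "T - insert i D = T - D"
    using assms by auto
  then show ?thesis
    using assms unfolding term_factor_def by auto
qed

lemma term_factor_fun_upd_False: "i \<in> T \<Longrightarrow> term_factor T (insert i D) (z(i := False)) = 1"
  unfolding term_factor_def by auto

lemma term_factor_falsified: "j \<in> T \<inter> D \<Longrightarrow> \<not> z j \<Longrightarrow> term_factor T D z = 1"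
  unfolding term_factor_def by auto

lemma term_factor_children_avg:
  assumes "finite T" "i \<in> T" "i \<notin> D" "\<forall>j\<in>T \<inter> D. z j"
  shows "(term_factor T (insert i D) (z(i := False)) + term_factor T (insert i D) (z(i := True))) / 2 =
    1 - (1/2) ^ card (T - D)"
proof -
  have "T - D = insert i (T - insert i D)" "i \<notin> T - insert i D"
    using assms(2,3) by auto
  then have "card (T - D) = Suc (card (T - insert i D))"
    using assms(1) by (metis card_insert_disjoint finite_Diff)
  moreover have "term_factor T (insert i D) (z(i := True)) = 1 - (1/2) ^ card (T - insert i D)"
    unfolding term_factor_def using assms(2,4) by (intro if_P) auto
  ultimately show ?thesis
    using term_factor_fun_upd_False[OF assms(2)] by simp
qed

locale read_once =
  fixes n :: nat and Ts :: "nat set set"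
  assumes read_once_dnf: "read_once_dnf n Ts"
begin

lemma finite_terms: "finite Ts"
  using read_once_dnf by (simp add: read_once_dnf_def)

lemma term_nonempty: "T \<in> Ts \<Longrightarrow> T \<noteq> {}"
  using read_once_dnf by (simp add: read_once_dnf_def)

lemma term_subset: "T \<in> Ts \<Longrightarrow> T \<subseteq> {..<n}"
  using read_once_dnf by (simp add: read_once_dnf_def)

lemma finite_term: "T \<in> Ts \<Longrightarrow> finite T"
  using term_subset finite_subset by blast

lemma terms_disjoint: "T \<in> Ts \<Longrightarrow> T' \<in> Ts \<Longrightarrow> T \<noteq> T' \<Longrightarrow> T \<inter> T' = {}"
  using read_once_dnf by (simp add: read_once_dnf_def)

lemma card_terms_le: "card Ts \<le> n"
proof -
  have Min_in: "Min T \<in> T" if "T \<in> Ts" for T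
    using finite_term term_nonempty that by simp
  have "inj_on Min Ts"
  proof (rule inj_onI)
    fix T T' assume "T \<in> Ts" "T' \<in> Ts" "Min T = Min T'"
    then show "T = T'" using Min_in terms_disjoint by (metis disjoint_iff)
  qed
  moreover have "Min ` Ts \<subseteq> {..<n}"
    using Min_in term_subset by blast
  ultimately show ?thesis
    using card_inj_on_le[of Min Ts "{..<n}"] by simp
qed

lemma expect_scan_count:
  assumes "distinct l" "set l \<subseteq> Ts"
  shows "expect n (\<lambda>_. 1/2) (\<lambda>x. real (scan_count l x)) = seq_cost l"
  using assms
proof (induction l)
  case Nil
  then show ?case by (simp add: expect_uniform_const)
next
  case (Cons T l)
  have "T \<inter> \<Union>(set l) = {}"
    using Cons.prems terms_disjoint by fastforce
  then have "expect n (\<lambda>_. 1/2) (\<lambda>x. of_bool (\<forall>i\<in>T. x i) * real (scan_count l x)) =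
      (1/2) ^ card T * seq_cost l"
    using Cons expect_all_ones[OF term_subset]
    by (simp add: expect_uniform_mult_indep[OF depends_only_all_ones depends_only_scan_count])
  moreover have "(\<lambda>x. real (scan_count (T # l) x)) =
      (\<lambda>x. 1 + real (scan_count l x) - of_bool (\<forall>i\<in>T. x i) * real (scan_count l x))"
    by (simp add: fun_eq_iff)
  ultimately show ?case
    using Cons by (simp only: expect_add expect_diff expect_uniform_const) (simp add: algebra_simps)
qed

definition weight :: "nat set \<Rightarrow> (nat \<Rightarrow> bool) \<Rightarrow> real" where
  "weight D z = (\<Prod>T\<in>Ts. term_factor T D z)"

definition untouched :: "nat set \<Rightarrow> nat set set" where
  "untouched D = {T\<in>Ts. T \<inter> D = {}}"

definition potential :: "nat set \<Rightarrow> (nat \<Rightarrow> bool) \<Rightarrow> real" where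
  "potential D z = weight D z * best_seq_cost (untouched D)"

lemma potential_nonneg: "0 \<le> potential D z"
proof -
  have "0 \<le> weight D z"
    unfolding weight_def using term_factor_bounds by (simp add: prod_nonneg)
  moreover have "0 \<le> best_seq_cost (untouched D)"
    using finite_terms by (simp add: untouched_def best_seq_cost_nonneg)
  ultimately show ?thesis by (simp add: potential_def)
qed

lemma weight_remove: "T0 \<in> Ts \<Longrightarrow> weight D z = term_factor T0 D z * (\<Prod>T\<in>Ts - {T0}. term_factor T D z)"
  unfolding weight_def using finite_terms by (simp add: prod.remove)

lemma weight_fun_upd:
  assumes "T0 \<in> Ts" "i \<in> T0"
  shows "weight (insert i D) (z(i := b)) =
    term_factor T0 (insert i D) (z(i := b)) * (\<Prod>T\<in>Ts - {T0}. term_factor T D z)"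
proof -
  have "i \<notin> T" if "T \<in> Ts - {T0}" for T
    using that assms terms_disjoint[of T0 T] by auto
  then show ?thesis
    using weight_remove[OF assms(1)] by (simp add: term_factor_fun_upd_other)
qed

lemma untouched_insert_term: "T0 \<in> Ts \<Longrightarrow> i \<in> T0 \<Longrightarrow> untouched (insert i D) = untouched D - {T0}"
  unfolding untouched_def using terms_disjoint by blast

lemma potential_fun_upd_outside_terms:
  assumes "\<forall>T\<in>Ts. i \<notin> T"
  shows "potential (insert i D) (z(i := b)) = potential D z"
proof -
  have "weight (insert i D) (z(i := b)) = weight D z"
    unfolding weight_def using assms by (auto intro!: prod.cong term_factor_fun_upd_other)
  moreover have "untouched (insert i D) = untouched D"
    unfolding untouched_def using assms by auto
  ultimately show ?thesis by (simp add: potential_def)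
qed

lemma potential_step_in_term:
  assumes T0: "T0 \<in> Ts" "i \<in> T0" and "i \<notin> D"
  shows "potential D z \<le>
    1 + (potential (insert i D) (z(i := False)) + potential (insert i D) (z(i := True))) / 2"
proof -
  define R where "R = (\<Prod>T\<in>Ts - {T0}. term_factor T D z)"
  define S' where "S' = best_seq_cost (untouched D - {T0})"
  have "0 \<le> R" "R \<le> 1"
    unfolding R_def using term_factor_bounds by (auto intro: prod_nonneg prod_le_1)
  have "0 \<le> S'"
    unfolding S'_def untouched_def using finite_terms by (simp add: best_seq_cost_nonneg)
  have child: "potential (insert i D) (z(i := b)) = term_factor T0 (insert i D) (z(i := b)) * R * S'" for b
    unfolding potential_def weight_fun_upd[OF T0] untouched_insert_term[OF T0] R_def S'_def ..
  have parent: "potential D z = term_factor T0 D z * R * best_seq_cost (untouched D)"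
    unfolding potential_def weight_remove[OF T0(1)] R_def ..
  have children_avg:
    "(potential (insert i D) (z(i := False)) + potential (insert i D) (z(i := True))) / 2 =
      (1 - (1/2) ^ card (T0 - D)) * R * S'" if "\<forall>j\<in>T0 \<inter> D. z j"
    unfolding child term_factor_children_avg[OF finite_term[OF T0(1)] T0(2) \<open>i \<notin> D\<close> that, symmetric]
    by (simp add: field_simps)
  consider (falsified) j where "j \<in> T0 \<inter> D" "\<not> z j" | (untouched) "T0 \<inter> D = {}"
    | (live) "T0 \<inter> D \<noteq> {}" "\<forall>j\<in>T0 \<inter> D. z j"
    by blast
  then show ?thesis
  proof cases
    case falsified
    have "j \<noteq> i"
      using falsified \<open>i \<notin> D\<close> by auto
    with falsified have "term_factor T0 (insert i D) (z(i := b)) = 1" "term_factor T0 D z = 1"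
        "untouched D - {T0} = untouched D" for b
      by (auto intro: term_factor_falsified[of j] simp: untouched_def)
    then show ?thesis
      using \<open>0 \<le> R\<close> \<open>0 \<le> S'\<close> by (simp add: child parent S'_def)
  next
    case untouched
    then have "T0 \<in> untouched D" "term_factor T0 D z = 1" "T0 - D = T0"
      using T0(1) by (auto simp: untouched_def term_factor_def)
    then have "potential D z \<le> R * (1 + (1 - (1/2) ^ card (T0 - D)) * S')"
      unfolding parent S'_def using \<open>0 \<le> R\<close> finite_terms
      by (simp add: mult_left_mono best_seq_cost_remove untouched_def)
    also have "\<dots> \<le> 1 + (1 - (1/2) ^ card (T0 - D)) * R * S'"
      using \<open>R \<le> 1\<close> by (simp add: algebra_simps)
    finally show ?thesis
      using children_avg untouched by simp
  next
    case live
    then have "untouched D - {T0} = untouched D" "term_factor T0 D z = 1 - (1/2) ^ card (T0 - D)"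
      by (auto simp: untouched_def term_factor_def)
    then show ?thesis
      using children_avg live \<open>0 \<le> R\<close> \<open>0 \<le> S'\<close> by (simp add: parent S'_def)
  qed
qed

lemma potential_step:
  assumes "i \<notin> D"
  shows "potential D z \<le>
    1 + (potential (insert i D) (z(i := False)) + potential (insert i D) (z(i := True))) / 2"
proof (cases "\<exists>T0\<in>Ts. i \<in> T0")
  case True
  then show ?thesis
    using potential_step_in_term assms by blast
next
  case False
  then show ?thesis
    using potential_fun_upd_outside_terms potential_nonneg[of D z] by simp
qed

lemma potential_determined:
  assumes "z \<in> inputs n" "determined n (dnf_eval Ts) D z"
  shows "potential D z = 0"
proof (cases "\<exists>T\<in>Ts. T \<subseteq> D \<and> (\<forall>i\<in>T. z i)")
  case True
  then obtain T where T: "T \<in> Ts" "T \<subseteq> D" "\<forall>i\<in>T. z i" by blast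
  have "card (T - D) = 0"
    using T(2) by (metis Diff_eq_empty_iff card.empty)
  then have "term_factor T D z = 0"
    using T term_nonempty[OF T(1)] unfolding term_factor_def by (simp add: Int_absorb2)
  then have "weight D z = 0"
    unfolding weight_def using finite_terms T(1) by (intro prod_zero) auto
  then show ?thesis by (simp add: potential_def)
next
  case False
  have "untouched D = {}"
  proof (rule ccontr)
    assume "untouched D \<noteq> {}"
    then obtain T1 where T1: "T1 \<in> Ts" "T1 \<inter> D = {}"
      by (auto simp: untouched_def)
    define y0 where "y0 i \<longleftrightarrow> i \<in> D \<and> z i" for i
    define y1 where "y1 i \<longleftrightarrow> (if i \<in> D then z i else i \<in> T1)" for i
    have "y0 \<in> inputs n" "y1 \<in> inputs n"
      using assms(1) term_subset[OF T1(1)] by (auto simp: inputs_def y0_def y1_def)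
    moreover have "\<forall>i\<in>D. y0 i = z i" "\<forall>i\<in>D. y1 i = z i"
      by (simp_all add: y0_def y1_def)
    ultimately have "dnf_eval Ts y0 = dnf_eval Ts y1"
      using determinedD[OF assms(2)] by simp
    moreover have "dnf_eval Ts y1"
      unfolding dnf_eval_def using T1 by (auto simp: y1_def)
    moreover have "\<not> dnf_eval Ts y0"
      unfolding dnf_eval_def using False by (auto simp: y0_def)
    ultimately show False by simp
  qed
  then show ?thesis by (simp add: potential_def)
qed

lemma potential_le_cost:
  assumes "dvars t \<subseteq> {..<n}" "z \<in> inputs n"
    and "\<forall>y\<in>subcube n D z. determined n (dnf_eval Ts) (D \<union> dtested t y) y"
  shows "potential D z \<le> cube_avg n D z (dcost (\<lambda>_. 1) t)"
  using assms
proof (induction t arbitrary: D z)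
  case Leaf
  then have "potential D z = 0"
    using potential_determined self_in_subcube by auto
  then show ?case
    using cube_avg_const[OF Leaf.prems(2)] by simp
next
  case (Node i l r)
  have vars: "i < n" "dvars l \<subseteq> {..<n}" "dvars r \<subseteq> {..<n}"
    using Node.prems(1) by auto
  have node_step: "potential D' z' \<le> cube_avg n D' z' (dcost (\<lambda>_. 1) (Node i l r)) - 1"
    if D': "i \<in> D'" "D \<subseteq> D'" "z' \<in> inputs n" "\<forall>j\<in>D. z' j = z j" for D' z'
  proof -
    let ?c = "if z' i then r else l"
    have "y \<in> subcube n D z" "D \<union> dtested (Node i l r) y \<subseteq> D' \<union> dtested ?c y"
      if "y \<in> subcube n D' z'" for y
      using that D' by (auto simp: subcube_def)
    then have det: "determined n (dnf_eval Ts) (D' \<union> dtested ?c y) y" if "y \<in> subcube n D' z'" for y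
      using that Node.prems(3) determined_mono by blast
    have "potential D' z' \<le> cube_avg n D' z' (dcost (\<lambda>_. 1) ?c)"
    proof (cases "z' i")
      case True
      then show ?thesis using Node.IH(2)[OF vars(3) D'(3)] det by simp
    next
      case False
      then show ?thesis using Node.IH(1)[OF vars(2) D'(3)] det by simp
    qed
    then show ?thesis
      using cube_avg_dcost_Node[OF D'(1,3)] by simp
  qed
  show ?case
  proof (cases "i \<in> D")
    case True
    then show ?thesis
      using node_step[OF True order_refl Node.prems(2)] by (simp del: dcost.simps)
  next
    case False
    have child: "potential (insert i D) (z(i := b)) \<le>
        cube_avg n (insert i D) (z(i := b)) (dcost (\<lambda>_. 1) (Node i l r)) - 1" for b
      using False by (intro node_step) (auto intro: fun_upd_in_inputs[OF Node.prems(2) vars(1)])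
    have "potential D z \<le>
        1 + (potential (insert i D) (z(i := False)) + potential (insert i D) (z(i := True))) / 2"
      by (rule potential_step[OF False])
    also have "\<dots> \<le> 1 + (cube_avg n (insert i D) (z(i := False)) (dcost (\<lambda>_. 1) (Node i l r)) - 1
        + (cube_avg n (insert i D) (z(i := True)) (dcost (\<lambda>_. 1) (Node i l r)) - 1)) / 2"
      by (intro add_left_mono divide_right_mono add_mono child) simp
    also have "\<dots> = cube_avg n D z (dcost (\<lambda>_. 1) (Node i l r))"
      unfolding cube_avg_split[OF False vars(1) Node.prems(2)] by (simp add: field_simps del: dcost.simps)
    finally show ?thesis .
  qed
qed

lemma best_seq_cost_le_expected_cost:
  assumes "valid_tree n (dnf_eval Ts) t"
  shows "best_seq_cost Ts \<le> expect n (\<lambda>_. 1/2) (dcost (\<lambda>_. 1) t)"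
proof -
  let ?z = "\<lambda>_. False"
  have "potential {} ?z = best_seq_cost Ts"
    by (simp add: potential_def weight_def term_factor_def untouched_def)
  moreover have "potential {} ?z \<le> cube_avg n {} ?z (dcost (\<lambda>_. 1) t)"
    using assms by (intro potential_le_cost) (auto simp: valid_tree_def inputs_def)
  ultimately show ?thesis
    by (simp add: expect_uniform[where z = ?z])
qed

lemma falsified_term_in_tested:
  assumes "determined n (dnf_eval Ts) A x" "x \<in> inputs n" "\<not> dnf_eval Ts x" "T \<in> Ts"
  shows "\<exists>i\<in>T \<inter> A. \<not> x i"
proof (rule ccontr)
  assume no_zero: "\<not> ?thesis"
  define y where "y i \<longleftrightarrow> (if i \<in> A then x i else i \<in> T)" for i
  have "y \<in> inputs n"
    using assms(2) term_subset[OF assms(4)] by (auto simp: inputs_def y_def)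
  moreover have "\<forall>i\<in>A. y i = x i"
    by (simp add: y_def)
  moreover have "dnf_eval Ts y"
    unfolding dnf_eval_def using no_zero assms(4) by (auto simp: y_def)
  ultimately show False
    using determinedD[OF assms(1)] assms(3) by blast
qed

lemma card_terms_le_card_tested:
  assumes "finite A" "determined n (dnf_eval Ts) A x" "x \<in> inputs n" "\<not> dnf_eval Ts x"
  shows "card Ts \<le> card A"
proof -
  have "\<forall>T\<in>Ts. \<exists>i. i \<in> T \<inter> A"
    using falsified_term_in_tested[OF assms(2-4)] by blast
  then obtain h where h: "\<forall>T\<in>Ts. h T \<in> T \<inter> A"
    by (auto dest!: bchoice)
  have "inj_on h Ts"
  proof (rule inj_onI)
    fix T T' assume "T \<in> Ts" "T' \<in> Ts" "h T = h T'"
    then show "T = T'" using h terms_disjoint by (metis IntD1 disjoint_iff)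
  qed
  moreover have "h ` Ts \<subseteq> A"
    using h by blast
  ultimately show ?thesis
    using card_inj_on_le[OF _ _ assms(1)] by blast
qed

lemma card_terms_mult_prob_false_le_cost:
  assumes "valid_tree n (dnf_eval Ts) t"
  shows "card Ts * expect n (\<lambda>_. 1/2) (\<lambda>x. of_bool (\<not> dnf_eval Ts x)) \<le>
    expect n (\<lambda>_. 1/2) (dcost (\<lambda>_. 1) t)"
  unfolding expect_cmult[symmetric]
proof (rule expect_uniform_mono)
  fix x assume x: "x \<in> inputs n"
  have "0 \<le> dcost (\<lambda>_. 1) t x"
    using card_dtested_le_dcost[of t x] by linarith
  moreover have "card Ts \<le> card (dtested t x)" if "\<not> dnf_eval Ts x"
    using assms x that finite_dtested unfolding valid_tree_def by (blast intro: card_terms_le_card_tested)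
  ultimately show "real (card Ts) * of_bool (\<not> dnf_eval Ts x) \<le> dcost (\<lambda>_. 1) t x"
    using card_dtested_le_dcost[of t x] by (cases "dnf_eval Ts x") auto
qed

lemma best_seq_cost_le_OPT_A: "best_seq_cost Ts \<le> OPT_A n (dnf_eval Ts) (\<lambda>_. 1) (\<lambda>_. 1/2)"
  by (rule OPT_A_greatest) (erule best_seq_cost_le_expected_cost)

lemma card_terms_mult_prob_false_le_OPT_A:
  "card Ts * expect n (\<lambda>_. 1/2) (\<lambda>x. of_bool (\<not> dnf_eval Ts x)) \<le> OPT_A n (dnf_eval Ts) (\<lambda>_. 1) (\<lambda>_. 1/2)"
  by (rule OPT_A_greatest) (erule card_terms_mult_prob_false_le_cost)

definition small_first :: "nat \<Rightarrow> nat set list \<Rightarrow> nat set list" where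
  "small_first K l = [T\<leftarrow>l. card T \<le> K] @ [T\<leftarrow>l. \<not> card T \<le> K]"

definition strategy :: "nat \<Rightarrow> nat set list \<Rightarrow> nat list" where
  "strategy K l = extend_perm n (blocks K (small_first K l))"

definition large_block_full :: "nat \<Rightarrow> (nat \<Rightarrow> bool) \<Rightarrow> bool" where
  "large_block_full K x \<longleftrightarrow> (\<exists>T\<in>Ts. K < card T \<and> (\<forall>i\<in>set (block K T). x i))"

lemma small_first_perm: "l \<in> permutations_of_set Ts \<Longrightarrow> small_first K l \<in> permutations_of_set Ts"
  by (auto simp: permutations_of_set_def small_first_def)

lemma distinct_blocks: "distinct l \<Longrightarrow> set l \<subseteq> Ts \<Longrightarrow> distinct (blocks K l)"
proof (induction l)
  case (Cons T l)
  have "set (block K T) \<inter> set (blocks K l) = {}"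
    using Cons.prems terms_disjoint set_block_subset unfolding set_blocks by fastforce
  with Cons show ?case
    by (simp add: blocks_def distinct_block)
qed (simp add: blocks_def)

lemma is_perm_strategy:
  assumes "l \<in> permutations_of_set Ts"
  shows "is_perm n (strategy K l)"
proof -
  have perm: "distinct (small_first K l)" "set (small_first K l) = Ts"
    using small_first_perm[OF assms] by (simp_all add: permutations_of_set_def)
  have "set (blocks K (small_first K l)) \<subseteq> {..<n}"
    using perm(2) set_block_subset term_subset unfolding set_blocks by blast
  with perm show ?thesis
    unfolding strategy_def by (intro is_perm_extend_perm distinct_blocks) auto
qed

lemma nacost_strategy_satisfied:
  assumes l: "l \<in> permutations_of_set Ts" and "\<not> large_block_full K x" "dnf_eval Ts x"
  shows "nacost n (dnf_eval Ts) (\<lambda>_. 1) (strategy K l) x \<le> real K * real (scan_count l x)"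
proof -
  let ?small = "[T\<leftarrow>l. card T \<le> K]"
  have set_l: "set l = Ts"
    using l by (simp add: permutations_of_set_def)
  have large_unsatisfied: "\<forall>T\<in>set l. \<not> card T \<le> K \<longrightarrow> \<not> (\<forall>i\<in>T. x i)"
    using assms(2) set_l set_block_subset unfolding large_block_full_def by (fastforce simp: not_le)
  then have "\<exists>T\<in>set ?small. \<forall>i\<in>T. x i"
    using assms(3) set_l unfolding dnf_eval_def by auto
  then obtain T where T: "T \<in> set ?small" "\<forall>i\<in>T. x i"
      "T \<subseteq> set (take (K * scan_count ?small x) (blocks K ?small))"
    using satisfied_term_in_prefix_blocks[of ?small K x] set_l finite_term by auto
  have "set (take k (blocks K ?small)) \<subseteq> set (take k (strategy K l))" for k
    using set_take_extend_perm[of k "blocks K (small_first K l)" n]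
    by (auto simp: strategy_def small_first_def blocks_def take_append)
  with T set_l have "nacost n (dnf_eval Ts) (\<lambda>_. 1) (strategy K l) x \<le> K * scan_count ?small x"
    by (intro nacost_le determined_of_satisfied_term[of T]) auto
  also have "\<dots> \<le> real K * real (scan_count l x)"
    using scan_count_filter_le[OF large_unsatisfied] by (simp add: mult_left_mono)
  finally show ?thesis .
qed

lemma nacost_strategy_falsified:
  assumes l: "l \<in> permutations_of_set Ts" and "\<not> large_block_full K x" "\<not> dnf_eval Ts x"
  shows "nacost n (dnf_eval Ts) (\<lambda>_. 1) (strategy K l) x \<le> real K * real (card Ts)"
  unfolding of_nat_mult[symmetric]
proof (intro nacost_le determined_of_falsified_terms ballI)
  fix T assume T: "T \<in> Ts"
  have "\<not> (\<forall>i\<in>set (block K T). x i)"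
  proof (cases "card T \<le> K")
    case True
    then show ?thesis
      using assms(3) T set_block_small[OF finite_term[OF T]] unfolding dnf_eval_def by auto
  next
    case False
    then show ?thesis
      using assms(2) T unfolding large_block_full_def by auto
  qed
  then obtain i where i: "i \<in> set (block K T)" "\<not> x i" by blast
  have "length (blocks K (small_first K l)) \<le> K * card Ts"
    using length_blocks[of K "small_first K l"] small_first_perm[OF l]
    by (simp add: permutations_of_set_def distinct_card[symmetric])
  then have "set (blocks K (small_first K l)) \<subseteq> set (take (K * card Ts) (strategy K l))"
    using set_take_extend_perm[of "K * card Ts" "blocks K (small_first K l)" n]
    by (simp add: strategy_def)
  moreover have "i \<in> set (blocks K (small_first K l))"
    using i T small_first_perm[OF l] by (auto simp: set_blocks permutations_of_set_def)
  ultimately show "\<exists>i\<in>T \<inter> set (take (K * card Ts) (strategy K l)). \<not> x i"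
    using i set_block_subset by blast
qed

lemma nacost_strategy_le:
  assumes "l \<in> permutations_of_set Ts" "x \<in> inputs n"
  shows "nacost n (dnf_eval Ts) (\<lambda>_. 1) (strategy K l) x \<le> real K * real (scan_count l x)
    + real K * real (card Ts) * of_bool (\<not> dnf_eval Ts x) + real n * of_bool (large_block_full K x)"
proof -
  have nonneg: "0 \<le> real K * real (scan_count l x)"
      "0 \<le> real K * real (card Ts) * of_bool (\<not> dnf_eval Ts x)"
    by simp_all
  consider (event) "large_block_full K x"
    | (satisfied) "\<not> large_block_full K x" "dnf_eval Ts x"
    | (falsified) "\<not> large_block_full K x" "\<not> dnf_eval Ts x"
    by blast
  then show ?thesis
  proof cases
    case event
    then have "real n * of_bool (large_block_full K x) = real n"
      by simp
    with nonneg show ?thesis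
      using nacost_le_n[OF is_perm_strategy[OF assms(1)] assms(2), of "dnf_eval Ts" K] by linarith
  next
    case satisfied
    then show ?thesis using nacost_strategy_satisfied[OF assms(1)] by simp
  next
    case falsified
    then show ?thesis
      using nacost_strategy_falsified[OF assms(1), of K x] by (simp add: add_increasing)
  qed
qed

lemma expect_large_block_full_le:
  "expect n (\<lambda>_. 1/2) (\<lambda>x. of_bool (large_block_full K x)) \<le> card Ts * (1/2) ^ K"
proof -
  let ?event = "\<lambda>T x. K < card T \<and> (\<forall>i\<in>set (block K T). x i)"
  have "expect n (\<lambda>_. 1/2) (\<lambda>x. of_bool (large_block_full K x)) \<le>
      expect n (\<lambda>_. 1/2) (\<lambda>x. \<Sum>T\<in>Ts. of_bool (?event T x))"
    unfolding large_block_full_def by (intro expect_uniform_mono of_bool_bex_le_sum finite_terms)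
  also have "\<dots> = (\<Sum>T\<in>Ts. expect n (\<lambda>_. 1/2) (\<lambda>x. of_bool (?event T x)))"
    by (rule expect_sum)
  also have "\<dots> \<le> (\<Sum>T\<in>Ts. (1/2) ^ K)"
  proof (rule sum_mono)
    fix T assume T: "T \<in> Ts"
    show "expect n (\<lambda>_. 1/2) (\<lambda>x. of_bool (?event T x)) \<le> (1/2) ^ K"
    proof (cases "K < card T")
      case True
      have "set (block K T) \<subseteq> {..<n}"
        using set_block_subset term_subset[OF T] by blast
      with True show ?thesis
        using expect_all_ones[of "set (block K T)" n] card_set_block_large[OF finite_term[OF T]] by simp
    qed (simp add: expect_uniform_const)
  qed
  finally show ?thesis by simp
qed

lemma expect_nacost_strategy_le:
  assumes "l \<in> permutations_of_set Ts" "seq_cost l = best_seq_cost Ts"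
  shows "nacost_exp n (dnf_eval Ts) (\<lambda>_. 1) (\<lambda>_. 1/2) (strategy K l) \<le>
    2 * K * OPT_A n (dnf_eval Ts) (\<lambda>_. 1) (\<lambda>_. 1/2) + n * card Ts * (1/2) ^ K"
proof -
  let ?E = "expect n (\<lambda>_. 1/2)" and ?OPT = "OPT_A n (dnf_eval Ts) (\<lambda>_. 1) (\<lambda>_. 1/2)"
  have "nacost_exp n (dnf_eval Ts) (\<lambda>_. 1) (\<lambda>_. 1/2) (strategy K l) \<le>
      ?E (\<lambda>x. real K * real (scan_count l x) + real K * real (card Ts) * of_bool (\<not> dnf_eval Ts x)
        + real n * of_bool (large_block_full K x))"
    unfolding nacost_exp_def using assms(1) by (intro expect_uniform_mono nacost_strategy_le)
  also have "\<dots> = K * ?E (\<lambda>x. scan_count l x) + K * (card Ts * ?E (\<lambda>x. of_bool (\<not> dnf_eval Ts x)))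
      + n * ?E (\<lambda>x. of_bool (large_block_full K x))"
    by (simp add: expect_add expect_cmult mult.assoc)
  also have "\<dots> \<le> K * ?OPT + K * ?OPT + n * (card Ts * (1/2) ^ K)"
    using assms best_seq_cost_le_OPT_A card_terms_mult_prob_false_le_OPT_A expect_large_block_full_le
      expect_scan_count[of l] by (intro add_mono mult_left_mono) (auto simp: permutations_of_set_def)
  finally show ?thesis by simp
qed

lemma exists_nonadaptive_le_OPT_A:
  assumes "real n ^ 2 \<le> 2 ^ K"
  shows "\<exists>\<sigma>. is_perm n \<sigma> \<and> nacost_exp n (dnf_eval Ts) (\<lambda>_. 1) (\<lambda>_. 1/2) \<sigma> \<le>
    (2 * K + 1) * OPT_A n (dnf_eval Ts) (\<lambda>_. 1) (\<lambda>_. 1/2)"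
proof -
  let ?OPT = "OPT_A n (dnf_eval Ts) (\<lambda>_. 1) (\<lambda>_. 1/2)"
  obtain l where l: "l \<in> permutations_of_set Ts" "seq_cost l = best_seq_cost Ts"
    using best_seq_cost_attained[OF finite_terms] by blast
  have "real n * card Ts * (1/2) ^ K \<le> ?OPT"
  proof (cases "Ts = {}")
    case True
    then show ?thesis using best_seq_cost_le_OPT_A by simp
  next
    case False
    have "real n * card Ts * (1/2) ^ K \<le> real n * real n * (1/2) ^ K"
      using card_terms_le by (intro mult_right_mono mult_left_mono) auto
    also have "\<dots> = real n ^ 2 / 2 ^ K"
      by (simp add: power2_eq_square power_one_over)
    also have "\<dots> \<le> 1"
      using assms by simp
    also have "1 \<le> ?OPT"
      using best_seq_cost_ge_1[OF finite_terms False] best_seq_cost_le_OPT_A by linarith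
    finally show ?thesis .
  qed
  then show ?thesis
    using expect_nacost_strategy_le[OF l, of K] is_perm_strategy[OF l(1), of K]
    by (intro exI[of _ "strategy K l"]) (auto simp: algebra_simps)
qed

end

lemma ln_2_ge_one_half: "1/2 \<le> ln (2::real)"
proof -
  have "exp (1/2::real) \<le> 2"
    using exp_bound_half[of "1/2::real"] by simp
  then show ?thesis
    by (subst ln_ge_iff) auto
qed

lemma block_size_exists:
  assumes "2 \<le> n"
  shows "\<exists>K. real n ^ 2 \<le> 2 ^ K \<and> 2 * real K + 1 \<le> 18 * ln (real n)"
proof -
  define k where "k = nat \<lceil>log 2 (real n)\<rceil>"
  have "1 \<le> log 2 (real n)"
    using assms by simp
  then have k: "real k = \<lceil>log 2 (real n)\<rceil>"
    unfolding k_def by simp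
  have "real n = 2 powr log 2 (real n)"
    using assms by simp
  also have "\<dots> \<le> 2 ^ k"
    unfolding powr_realpow[symmetric, of 2 k, simplified] k by (rule powr_mono) auto
  finally have "real n ^ 2 \<le> 2 ^ (2 * k)"
    by (metis power_mono power_mult mult.commute of_nat_0_le_iff)
  moreover have "2 * real (2 * k) + 1 \<le> 18 * ln (real n)"
  proof -
    have "ln 2 \<le> ln (real n)"
      using assms by simp
    then have ln_n: "1/2 \<le> ln (real n)"
      using ln_2_ge_one_half by linarith
    have "log 2 (real n) \<le> 2 * ln (real n)"
      using ln_2_ge_one_half ln_n by (simp add: log_def divide_le_eq)
    moreover have "real k \<le> log 2 (real n) + 1"
      using k by linarith
    ultimately show ?thesis
      using ln_n by simp
  qed
  ultimately show ?thesis by blast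
qed

theorem theorem1:
  shows "\<exists>C>0. \<forall>n\<ge>2. \<forall>Ts. read_once_dnf n Ts \<longrightarrow>
           (\<exists>\<sigma>. is_perm n \<sigma> \<and>
              nacost_exp n (dnf_eval Ts) (\<lambda>_. 1) (\<lambda>_. 1/2) \<sigma>
                \<le> C * ln (real n) * OPT_A n (dnf_eval Ts) (\<lambda>_. 1) (\<lambda>_. 1/2))"
proof (intro exI[of _ 18] conjI allI impI)
  fix n :: nat and Ts
  assume "2 \<le> n" "read_once_dnf n Ts"
  then interpret read_once n Ts
    by unfold_locales
  let ?OPT = "OPT_A n (dnf_eval Ts) (\<lambda>_. 1) (\<lambda>_. 1/2)"
  obtain K where K: "real n ^ 2 \<le> 2 ^ K" "2 * real K + 1 \<le> 18 * ln (real n)"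
    using block_size_exists[OF \<open>2 \<le> n\<close>] by blast
  have "0 \<le> ?OPT"
    using best_seq_cost_le_OPT_A best_seq_cost_nonneg[OF finite_terms] by linarith
  then have "(2 * real K + 1) * ?OPT \<le> 18 * ln (real n) * ?OPT"
    using K(2) by (rule mult_right_mono[rotated])
  then show "\<exists>\<sigma>. is_perm n \<sigma> \<and> nacost_exp n (dnf_eval Ts) (\<lambda>_. 1) (\<lambda>_. 1/2) \<sigma> \<le> 18 * ln (real n) * ?OPT"
    using exists_nonadaptive_le_OPT_A[OF K(1)] by fastforce
qed simp

end
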